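(* Let $F$ be a positive integer and let $p$ be the least positive integer such that $p\nmid F$. Then $$\min\{\mathrm{g}(S)\mid S\in\mathrm{Sat}(F)\}=F-\left\lfloor \frac{F}{p}\right\rfloor.$$
   Context: A numerical semigroup is a subset $S\subseteq\mathbb{N}$ closed under addition, containing $0$, with $\mathbb{N}\setminus S$ finite. Its genus $\mathrm{g}(S)$ is the cardinality of $\mathbb{N}\setminus S$, and its Frobenius number $\mathrm{F}(S)$ is the largest integer not in $S$. For $A\subseteq\mathbb{N}$ and $a\in A$, let $\mathrm{d}_A(a)=\gcd\{x\in A\mid x\le a\}$. A numerical semigroup $S$ is saturated if $s+\mathrm{d}_S(s)\in S$ for all $s\in S\setminus\{0\}$. For a positive integer $F$, $\mathrm{Sat}(F)$ denotes the set of all saturated numerical semigroups $S$ with $\mathrm{F}(S)=F$. *)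

theory Defs
  imports Main
begin

definition numerical_semigroup :: "nat set \<Rightarrow> bool" where
  "numerical_semigroup S \<longleftrightarrow> 0 \<in> S \<and> (\<forall>x\<in>S. \<forall>y\<in>S. x + y \<in> S) \<and> finite (UNIV - S)"

definition genus :: "nat set \<Rightarrow> nat" where
  "genus S = card (UNIV - S)"

(* Frobenius number: largest integer not in S (only meaningful when S \<noteq> UNIV) *)
definition frobenius :: "nat set \<Rightarrow> nat" where
  "frobenius S = Max (UNIV - S)"

definition dA :: "nat set \<Rightarrow> nat \<Rightarrow> nat" where
  "dA A a = Gcd {x \<in> A. x \<le> a}"

definition saturated :: "nat set \<Rightarrow> bool" where
  "saturated S \<longleftrightarrow> numerical_semigroup S \<and> (\<forall>s \<in> S - {0}. s + dA S s \<in> S)"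

definition Sat :: "nat \<Rightarrow> nat set set" where
  "Sat F = {S. saturated S \<and> S \<noteq> UNIV \<and> frobenius S = F}"

end

theory Submission
  imports Defs
begin

text \<open>
  Let \<open>S \<in> Sat F\<close> and let \<open>m\<close> be its largest nonzero element below \<open>F\<close>. Saturation puts
  \<open>m + d\<^sub>S(m)\<close> into \<open>S\<close>, and by maximality of \<open>m\<close> it lies beyond \<open>F\<close>; hence \<open>d\<^sub>S(m)\<close>, which divides
  every element of \<open>S\<close> below \<open>F\<close>, cannot divide \<open>F\<close>, so \<open>d\<^sub>S(m) \<ge> p\<close> and \<open>S\<close> has at most
  \<open>\<lfloor>F/p\<rfloor>\<close> nonzero elements below \<open>F\<close>. The bound is attained by the multiples of \<open>p\<close> below \<open>F\<close>
  together with all integers above \<open>F\<close>.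
\<close>

lemma card_multiples_atLeastAtMost:
  fixes d n :: nat
  assumes "d > 0"
  shows "card {x \<in> {1..n}. d dvd x} = n div d"
proof -
  have "{x \<in> {1..n}. d dvd x} = (*) d ` {1..n div d}"
  proof (intro set_eqI iffI)
    fix x assume "x \<in> {x \<in> {1..n}. d dvd x}"
    then obtain k where x: "x = d * k" "1 \<le> d * k" "d * k \<le> n" by auto
    then have "k \<in> {1..n div d}"
      using assms by (auto simp: less_eq_div_iff_mult_less_eq mult.commute intro: Suc_leI)
    then show "x \<in> (*) d ` {1..n div d}" using x by blast
  next
    fix x assume "x \<in> (*) d ` {1..n div d}"
    then obtain k where k: "1 \<le> k" "k \<le> n div d" and x: "x = d * k" by auto
    have "d * k \<le> n" using k(2) assms by (simp add: less_eq_div_iff_mult_less_eq mult.commute)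
    then show "x \<in> {x \<in> {1..n}. d dvd x}" using k(1) assms x by auto
  qed
  moreover have "inj_on ((*) d) {1..n div d}" using assms by (auto simp: inj_on_def)
  ultimately show ?thesis by (simp add: card_image)
qed

lemma frobenius_not_mem:
  assumes "numerical_semigroup S" "S \<noteq> UNIV"
  shows "frobenius S \<notin> S"
proof -
  have "finite (UNIV - S)" "UNIV - S \<noteq> {}"
    using assms by (auto simp: numerical_semigroup_def)
  then show ?thesis unfolding frobenius_def using Max_in by blast
qed

lemma mem_if_frobenius_less:
  assumes "numerical_semigroup S" "frobenius S < x"
  shows "x \<in> S"
proof (rule ccontr)
  assume "x \<notin> S"
  then have "x \<le> frobenius S"
    using assms(1) unfolding numerical_semigroup_def frobenius_def by (intro Max_ge) auto
  then show False using assms(2) by simp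
qed

lemma frobenius_pos:
  assumes "numerical_semigroup S" "S \<noteq> UNIV"
  shows "frobenius S > 0"
  using frobenius_not_mem[OF assms] assms(1)
  by (auto simp: numerical_semigroup_def intro: gr0I)

lemma genus_eq_card_small_elements:
  assumes "numerical_semigroup S" "S \<noteq> UNIV"
  shows "genus S = frobenius S - card ({1..frobenius S} \<inter> S)"
proof -
  have "UNIV - S \<subseteq> {1..frobenius S}"
  proof
    fix x assume "x \<in> UNIV - S"
    moreover have "0 \<in> S" using assms(1) by (simp add: numerical_semigroup_def)
    ultimately have "x \<noteq> 0" by (metis DiffD2)
    moreover have "\<not> frobenius S < x"
      using \<open>x \<in> UNIV - S\<close> mem_if_frobenius_less[OF assms(1)] by blast
    ultimately show "x \<in> {1..frobenius S}" by simp
  qed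
  then have "UNIV - S = {1..frobenius S} - ({1..frobenius S} \<inter> S)" by blast
  then show ?thesis
    unfolding genus_def by (simp add: card_Diff_subset)
qed

lemma saturated_common_divisor_below_frobenius:
  assumes sat: "saturated S" and "S \<noteq> UNIV"
  defines "F \<equiv> frobenius S"
  obtains d where "d > 0" "\<not> d dvd F" "\<And>x. x \<in> S \<Longrightarrow> x < F \<Longrightarrow> d dvd x"
proof (cases "{1..<F} \<inter> S = {}")
  case True
  have "F > 0" using frobenius_pos assms by (simp add: saturated_def)
  then have "\<not> Suc F dvd F" by (auto dest: dvd_imp_le)
  moreover have "Suc F dvd x" if "x \<in> S" "x < F" for x
  proof -
    have "x \<notin> {1..<F}" using True that(1) by blast
    then have "x = 0" using that(2) by simp
    then show ?thesis by simp
  qed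
  ultimately show ?thesis using that by blast
next
  case False
  have ns: "numerical_semigroup S" using sat by (simp add: saturated_def)
  have FnS: "F \<notin> S" using frobenius_not_mem[OF ns \<open>S \<noteq> UNIV\<close>] by (simp add: F_def)
  define m where "m = Max ({1..<F} \<inter> S)"
  have m: "m \<in> {1..<F} \<inter> S" unfolding m_def using False by (intro Max_in) auto
  have m_max: "x \<le> m" if "x \<in> {1..<F} \<inter> S" for x unfolding m_def using that by (intro Max_ge) auto
  define d where "d = dA S m"
  have d_dvd: "d dvd x" if "x \<in> S" "x \<le> m" for x
    unfolding d_def dA_def using that by (intro Gcd_dvd) auto
  have "d > 0"
    using d_dvd[of m] m by (intro gr0I) auto
  have md: "m + d \<in> S" using sat m unfolding saturated_def d_def by auto
  have "\<not> d dvd F"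
  proof
    assume "d dvd F"
    then have "d dvd F - m" using d_dvd[of m] m by (simp add: dvd_diff_nat)
    then have "m + d \<le> F" using m by (auto dest: dvd_imp_le)
    then have "m + d \<in> {1..<F} \<inter> S" using md FnS m by (cases "m + d = F") auto
    then show False using m_max \<open>d > 0\<close> by fastforce
  qed
  moreover have "d dvd x" if "x \<in> S" "x < F" for x
    using that m_max[of x] d_dvd[of x] by (cases "x = 0") auto
  ultimately show ?thesis using that \<open>d > 0\<close> by blast
qed

lemma genus_lower_bound_Sat:
  fixes F p :: nat
  assumes p_least: "\<And>d. d > 0 \<Longrightarrow> \<not> d dvd F \<Longrightarrow> p \<le> d" and "p > 0" and S: "S \<in> Sat F"
  shows "F - F div p \<le> genus S"
proof -
  have sat: "saturated S" and "S \<noteq> UNIV" and F: "frobenius S = F"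
    using S by (auto simp: Sat_def)
  have ns: "numerical_semigroup S" using sat by (simp add: saturated_def)
  obtain d where "d > 0" "\<not> d dvd F" and d_dvd: "\<And>x. x \<in> S \<Longrightarrow> x < F \<Longrightarrow> d dvd x"
    using saturated_common_divisor_below_frobenius[OF sat \<open>S \<noteq> UNIV\<close>] F by metis
  have "F \<notin> S" using frobenius_not_mem[OF ns \<open>S \<noteq> UNIV\<close>] F by simp
  then have "{1..F} \<inter> S \<subseteq> {x \<in> {1..F}. d dvd x}"
    using d_dvd by (fastforce simp: le_less)
  then have "card ({1..F} \<inter> S) \<le> F div d"
    using card_mono[of "{x \<in> {1..F}. d dvd x}"] card_multiples_atLeastAtMost[OF \<open>d > 0\<close>] by auto
  also have "\<dots> \<le> F div p" using p_least \<open>d > 0\<close> \<open>\<not> d dvd F\<close> \<open>p > 0\<close> by (simp add: div_le_mono2)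
  finally show ?thesis
    using genus_eq_card_small_elements[OF ns \<open>S \<noteq> UNIV\<close>] F by simp
qed

definition multiples_below_semigroup :: "nat \<Rightarrow> nat \<Rightarrow> nat set" where
  "multiples_below_semigroup p F = {x. p dvd x \<and> x < F} \<union> {x. F < x}"

lemma mem_multiples_below_semigroup_iff:
  assumes "\<not> p dvd F"
  shows "x \<in> multiples_below_semigroup p F \<longleftrightarrow> F < x \<or> p dvd x"
  using assms by (cases x F rule: linorder_cases) (auto simp: multiples_below_semigroup_def)

lemma multiples_below_semigroup_in_Sat:
  fixes F p :: nat
  assumes "\<not> p dvd F" and "F > 0"
  shows "multiples_below_semigroup p F \<in> Sat F"
proof -
  let ?S = "multiples_below_semigroup p F"
  note mem = mem_multiples_below_semigroup_iff[OF \<open>\<not> p dvd F\<close>]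
  have compl: "UNIV - ?S = {x \<in> {1..F}. \<not> p dvd x}"
    using \<open>\<not> p dvd F\<close> by (auto simp: mem Suc_le_eq intro: gr0I)
  have ns: "numerical_semigroup ?S"
    unfolding numerical_semigroup_def
  proof (intro conjI ballI)
    show "0 \<in> ?S" by (simp add: mem)
    show "finite (UNIV - ?S)" unfolding compl by simp
  next
    fix x y assume "x \<in> ?S" "y \<in> ?S"
    then show "x + y \<in> ?S" unfolding mem by auto
  qed
  have "s + dA ?S s \<in> ?S" if "s \<in> ?S" for s
  proof (cases "F < s")
    case True
    then show ?thesis by (simp add: mem)
  next
    case False
    then have "p dvd s" using that by (simp add: mem)
    moreover have "p dvd dA ?S s"
      unfolding dA_def using False by (intro Gcd_greatest) (auto simp: mem)
    ultimately show ?thesis by (simp add: mem)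
  qed
  then have "saturated ?S"
    using ns by (simp add: saturated_def)
  moreover have "frobenius ?S = F"
    unfolding frobenius_def compl using \<open>F > 0\<close> \<open>\<not> p dvd F\<close> by (intro Max_eqI) auto
  moreover have "?S \<noteq> UNIV"
    using \<open>\<not> p dvd F\<close> mem[of F] by blast
  ultimately show ?thesis by (simp add: Sat_def)
qed

lemma genus_multiples_below_semigroup:
  fixes F p :: nat
  assumes "\<not> p dvd F" and "p > 0" and "F > 0"
  shows "genus (multiples_below_semigroup p F) = F - F div p"
proof -
  have "multiples_below_semigroup p F \<in> Sat F"
    using multiples_below_semigroup_in_Sat assms by blast
  then have "genus (multiples_below_semigroup p F) = F - card ({1..F} \<inter> multiples_below_semigroup p F)"
    using genus_eq_card_small_elements by (auto simp: Sat_def saturated_def)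
  also have "{1..F} \<inter> multiples_below_semigroup p F = {x \<in> {1..F}. p dvd x}"
    using assms by (auto simp: mem_multiples_below_semigroup_iff)
  finally show ?thesis using card_multiples_atLeastAtMost[OF \<open>p > 0\<close>] by simp
qed

theorem corollary32:
  fixes F p :: nat
  assumes "F > 0"
    and "p = (LEAST q. q > 0 \<and> \<not> q dvd F)"
  shows "Min (genus ` Sat F) = F - F div p"
proof -
  have "Suc F > 0 \<and> \<not> Suc F dvd F" using assms(1) by (auto dest: dvd_imp_le)
  then have "p > 0 \<and> \<not> p dvd F" unfolding assms(2) by (rule LeastI[of _ "Suc F"])
  then have p: "p > 0" "\<not> p dvd F" by auto
  have p_least: "p \<le> d" if "d > 0" "\<not> d dvd F" for d
    unfolding assms(2) by (rule Least_le) (use that in simp)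
  have "genus ` Sat F \<subseteq> {..F}"
    using genus_eq_card_small_elements unfolding Sat_def saturated_def by fastforce
  then have "finite (genus ` Sat F)" using finite_subset by blast
  moreover have "F - F div p \<in> genus ` Sat F"
    using multiples_below_semigroup_in_Sat[OF p(2) assms(1)]
      genus_multiples_below_semigroup[OF p(2) p(1) assms(1)] by (metis image_eqI)
  moreover have "F - F div p \<le> g" if "g \<in> genus ` Sat F" for g
    using that genus_lower_bound_Sat[OF p_least p(1)] by auto
  ultimately show ?thesis by (intro Min_eqI)
qed

end
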